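(* In the zero-sum three-door Monty Hall game described in the context, the mixed strategy $P^*$ of Conie assigning probability $1/3$ to each of $1\,\mathrm{s}\,\mathrm{s}$, $2\,\mathrm{s}\,\mathrm{s}$, $3\,\mathrm{s}\,\mathrm{s}$ (choose a door uniformly at random, then always switch) is Conie's unique minimax strategy, i.e. the unique mixed strategy $P$ with $\min_Q W(P,Q)=\max_{P'}\min_Q W(P',Q)$.
   Context: Doors are numbered $1,2,3$. A pure strategy of Monte is a pair $(\theta,d)$ with $\theta\in\{1,2,3\}$ (the door hiding the prize) and $d\in\{1,2,3\}\setminus\{\theta\}$ (six strategies). A pure strategy of Conie is a triple $x\,a\,b$ with $x\in\{1,2,3\}$ and $a,b\in\{\mathrm{h},\mathrm{s}\}$ (twelve strategies). Under the profile $((\theta,d),x\,a\,b)$: Monte offers door $y=\theta$ if $x\neq\theta$ and $y=d$ if $x=\theta$; Conie's action is $a$ if $y$ is the smaller of the two doors in $\{1,2,3\}\setminus\{x\}$ and $b$ otherwise; her final choice is $z=x$ for action $\mathrm{h}$ and $z=y$ for action $\mathrm{s}$; she wins (payoff 1) iff $z=\theta$, else payoff 0; Monte's payoff is the negative. Mixed strategies are probability distributions on pure strategies, played independently; $W(P,Q)$ denotes the probability that Conie wins when Conie plays $P$ and Monte plays $Q$. *)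

theory Defs
  imports "HOL-Probability.Probability"
begin

datatype action = hold | switch

type_synonym monte_pure = "nat \<times> nat"
type_synonym conie_pure = "nat \<times> action \<times> action"

definition doors :: "nat set" where "doors = {1,2,3}"

definition monte_strats :: "monte_pure set" where
  "monte_strats = {(\<theta>, d). \<theta> \<in> doors \<and> d \<in> doors - {\<theta>}}"

definition conie_strats :: "conie_pure set" where
  "conie_strats = {(x, a, b). x \<in> doors}"

definition offered :: "monte_pure \<Rightarrow> conie_pure \<Rightarrow> nat" where
  "offered m c = (case m of (\<theta>, d) \<Rightarrow> case c of (x, a, b) \<Rightarrow>
     if x \<noteq> \<theta> then \<theta> else d)"

definition conie_action :: "monte_pure \<Rightarrow> conie_pure \<Rightarrow> action" where
  "conie_action m c = (case c of (x, a, b) \<Rightarrow>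
     if offered m c = Min (doors - {x}) then a else b)"

definition final_choice :: "monte_pure \<Rightarrow> conie_pure \<Rightarrow> nat" where
  "final_choice m c = (case c of (x, a, b) \<Rightarrow>
     (case conie_action m c of hold \<Rightarrow> x | switch \<Rightarrow> offered m c))"

definition payoff :: "conie_pure \<Rightarrow> monte_pure \<Rightarrow> real" where
  "payoff c m = (if final_choice m c = fst m then 1 else 0)"

definition conie_mixed :: "conie_pure pmf \<Rightarrow> bool" where
  "conie_mixed P \<longleftrightarrow> set_pmf P \<subseteq> conie_strats"

definition monte_mixed :: "monte_pure pmf \<Rightarrow> bool" where
  "monte_mixed Q \<longleftrightarrow> set_pmf Q \<subseteq> monte_strats"

definition W :: "conie_pure pmf \<Rightarrow> monte_pure pmf \<Rightarrow> real" where
  "W P Q = (\<Sum>c\<in>conie_strats. \<Sum>m\<in>monte_strats. pmf P c * pmf Q m * payoff c m)"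

definition guarantee :: "conie_pure pmf \<Rightarrow> real" where
  "guarantee P = (INF Q\<in>{Q. monte_mixed Q}. W P Q)"

definition minimax_strategy :: "conie_pure pmf \<Rightarrow> bool" where
  "minimax_strategy P \<longleftrightarrow> conie_mixed P \<and>
     guarantee P = (SUP P'\<in>{P'. conie_mixed P'}. guarantee P')"

definition P_star :: "conie_pure pmf" where
  "P_star = pmf_of_set {(1, switch, switch), (2, switch, switch), (3, switch, switch)}"

end

(* Against Monte's six pure strategies, always switching wins exactly when the prize is not behind
   Conie's first door, i.e. 4 times; every other pure strategy of Conie wins at most 3 times.
   Averaging over Monte's pure strategies, every P guarantees at most 2/3, with equality only if P
   is supported on the always-switch strategies. For such P the winning probability against
   (\<theta>, d) is 1 - P(\<theta> s s), so a guarantee of 2/3 forces every P(\<theta> s s) \<le> 1/3, hence = 1/3. *)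
theory Submission
  imports Defs
begin

lemma UNIV_action: "(UNIV :: action set) = {hold, switch}"
  using action.exhaust by auto

lemma conie_strats_eq: "conie_strats = doors \<times> UNIV \<times> UNIV"
  by (auto simp: conie_strats_def)

lemma monte_strats_eq: "monte_strats = {(1,2), (1,3), (2,1), (2,3), (3,1), (3,2)}"
  unfolding monte_strats_def doors_def by auto

lemma finite_conie_strats: "finite conie_strats"
  by (simp add: conie_strats_eq UNIV_action doors_def)

lemma finite_monte_strats: "finite monte_strats"
  by (simp add: monte_strats_eq)

lemma card_monte_strats: "card monte_strats = 6"
  by (simp add: monte_strats_eq)

definition always_switch :: "nat \<Rightarrow> conie_pure" where
  "always_switch x = (x, switch, switch)"

definition switchers :: "conie_pure set" where
  "switchers = always_switch ` doors"

lemma inj_always_switch: "inj always_switch"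
  by (rule injI) (simp add: always_switch_def)

lemma switchers_subset: "switchers \<subseteq> conie_strats"
  by (auto simp: switchers_def always_switch_def conie_strats_def)

lemma finite_switchers: "finite switchers"
  by (simp add: switchers_def doors_def)

lemma payoff_always_switch:
  assumes "m \<in> monte_strats"
  shows "payoff (always_switch x) m = (if x = fst m then 0 else 1)"
  using assms
  by (auto simp: monte_strats_def payoff_def final_choice_def conie_action_def
                 offered_def always_switch_def split: if_splits)

lemma Min_doors_remove: "Min (doors - {x}) = (if x = 1 then 2 else 1)"
proof (cases "x = 1")
  case False
  then have "Min (doors - {x}) = 1"
    by (intro Min_eqI) (auto simp: doors_def)
  then show ?thesis
    using False by simp
qed (simp add: doors_def)

lemma sum_payoff_always_switch:
  assumes "x \<in> doors"
  shows "(\<Sum>m\<in>monte_strats. payoff (always_switch x) m) = 4"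
proof -
  have "(\<Sum>m\<in>monte_strats. payoff (always_switch x) m)
      = (\<Sum>m\<in>monte_strats. if x = fst m then 0 else 1)"
    by (intro sum.cong refl payoff_always_switch)
  then show ?thesis
    using assms by (auto simp: monte_strats_eq doors_def)
qed

lemma sum_payoff_le_three:
  assumes "x \<in> doors" and "(a, b) \<noteq> (switch, switch)"
  shows "(\<Sum>m\<in>monte_strats. payoff (x, a, b) m) \<le> 3"
  using assms unfolding doors_def
  by (cases a; cases b; elim insertE; simp add: monte_strats_eq payoff_def final_choice_def
      conie_action_def offered_def Min_doors_remove)

lemma sum_payoff_le:
  assumes "c \<in> conie_strats"
  shows "(\<Sum>m\<in>monte_strats. payoff c m) \<le> (if c \<in> switchers then 4 else 3)"
proof -
  obtain x a b where c: "c = (x, a, b)" and x: "x \<in> doors"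
    using assms by (cases c) (auto simp: conie_strats_def)
  show ?thesis
  proof (cases "c \<in> switchers")
    case True
    then show ?thesis
      by (auto simp: switchers_def sum_payoff_always_switch)
  next
    case False
    then have "(a, b) \<noteq> (switch, switch)"
      using x by (auto simp: c switchers_def always_switch_def)
    then show ?thesis
      using False sum_payoff_le_three[OF x] by (simp add: c)
  qed
qed

definition win_prob :: "conie_pure pmf \<Rightarrow> monte_pure \<Rightarrow> real" where
  "win_prob P m = (\<Sum>c\<in>conie_strats. pmf P c * payoff c m)"

lemma W_eq_sum_win_prob: "W P Q = (\<Sum>m\<in>monte_strats. pmf Q m * win_prob P m)"
  unfolding W_def win_prob_def
  by (subst sum.swap) (simp add: sum_distrib_left mult_ac)

lemma W_return_pmf:
  assumes "m \<in> monte_strats"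
  shows "W P (return_pmf m) = win_prob P m"
proof -
  have "W P (return_pmf m) = (\<Sum>m'\<in>monte_strats. if m' = m then win_prob P m else 0)"
    unfolding W_eq_sum_win_prob by (intro sum.cong) (auto simp: pmf_return)
  then show ?thesis
    using assms finite_monte_strats by (simp add: sum.delta')
qed

lemma guarantee_le_win_prob:
  assumes "m \<in> monte_strats"
  shows "guarantee P \<le> win_prob P m"
proof -
  have "monte_mixed (return_pmf m)"
    using assms by (simp add: monte_mixed_def)
  moreover have "bdd_below (W P ` {Q. monte_mixed Q})"
    by (rule bdd_belowI[where m = 0]) (auto simp: W_def payoff_def intro!: sum_nonneg)
  ultimately have "guarantee P \<le> W P (return_pmf m)"
    unfolding guarantee_def by (intro cINF_lower) auto
  then show ?thesis
    by (simp add: W_return_pmf[OF assms])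
qed

lemma le_guarantee:
  assumes "\<And>m. m \<in> monte_strats \<Longrightarrow> g \<le> win_prob P m"
  shows "g \<le> guarantee P"
  unfolding guarantee_def
proof (rule cINF_greatest)
  have "monte_mixed (return_pmf (1, 2))"
    by (simp add: monte_mixed_def monte_strats_eq)
  then show "{Q. monte_mixed Q} \<noteq> {}"
    by blast
next
  fix Q assume "Q \<in> {Q. monte_mixed Q}"
  then have "set_pmf Q \<subseteq> monte_strats"
    by (simp add: monte_mixed_def)
  then have "g = (\<Sum>m\<in>monte_strats. pmf Q m * g)"
    using sum_pmf_eq_1[OF finite_monte_strats] by (simp add: sum_distrib_right[symmetric])
  also have "\<dots> \<le> (\<Sum>m\<in>monte_strats. pmf Q m * win_prob P m)"
    by (intro sum_mono mult_left_mono assms) auto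
  finally show "g \<le> W P Q"
    by (simp add: W_eq_sum_win_prob)
qed

lemma guarantee_le_average: "6 * guarantee P \<le> (\<Sum>m\<in>monte_strats. win_prob P m)"
proof -
  have "(\<Sum>m\<in>monte_strats. guarantee P) \<le> (\<Sum>m\<in>monte_strats. win_prob P m)"
    by (intro sum_mono guarantee_le_win_prob)
  then show ?thesis
    by (simp add: card_monte_strats)
qed

lemma sum_win_prob_le:
  assumes "conie_mixed P"
  shows "(\<Sum>m\<in>monte_strats. win_prob P m) + (\<Sum>c\<in>conie_strats - switchers. pmf P c) \<le> 4"
proof -
  let ?N = "conie_strats - switchers"
  have mass: "(\<Sum>c\<in>?N. pmf P c) + (\<Sum>c\<in>switchers. pmf P c) = 1"
    using sum_pmf_eq_1[OF finite_conie_strats] assms switchers_subset finite_conie_strats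
    by (simp add: conie_mixed_def sum.subset_diff[of switchers conie_strats])
  have "(\<Sum>m\<in>monte_strats. win_prob P m)
      = (\<Sum>c\<in>conie_strats. pmf P c * (\<Sum>m\<in>monte_strats. payoff c m))"
    unfolding win_prob_def by (subst sum.swap) (simp add: sum_distrib_left)
  also have "\<dots> \<le> (\<Sum>c\<in>conie_strats. pmf P c * (if c \<in> switchers then 4 else 3))"
    by (intro sum_mono mult_left_mono sum_payoff_le) auto
  also have "\<dots> = (\<Sum>c\<in>?N. 3 * pmf P c) + (\<Sum>c\<in>switchers. 4 * pmf P c)"
    using switchers_subset finite_conie_strats
    by (simp add: sum.subset_diff[of switchers conie_strats] mult.commute)
  also have "\<dots> = 3 * (\<Sum>c\<in>?N. pmf P c) + 4 * (\<Sum>c\<in>switchers. pmf P c)"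
    by (simp add: sum_distrib_left)
  finally show ?thesis
    using mass by linarith
qed

lemma guarantee_le_two_thirds:
  assumes "conie_mixed P"
  shows "guarantee P \<le> 2/3"
  using guarantee_le_average[of P] sum_win_prob_le[OF assms]
    sum_nonneg[of "conie_strats - switchers" "pmf P"]
  by simp

lemma set_pmf_subset_switchers:
  assumes "conie_mixed P" and "guarantee P = 2/3"
  shows "set_pmf P \<subseteq> switchers"
proof
  fix c assume c: "c \<in> set_pmf P"
  have "(\<Sum>c\<in>conie_strats - switchers. pmf P c) \<le> 0"
    using guarantee_le_average[of P] sum_win_prob_le[OF assms(1)] assms(2) by simp
  then have "(\<Sum>c\<in>conie_strats - switchers. pmf P c) = 0"
    by (intro antisym sum_nonneg) auto
  then have "\<forall>c\<in>conie_strats - switchers. pmf P c = 0"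
    using finite_conie_strats by (simp add: sum_nonneg_eq_0_iff)
  then show "c \<in> switchers"
    using c assms(1) by (auto simp: conie_mixed_def set_pmf_eq)
qed

lemma sum_pmf_always_switch:
  assumes "set_pmf P \<subseteq> switchers"
  shows "(\<Sum>x\<in>doors. pmf P (always_switch x)) = 1"
  using sum_pmf_eq_1[OF finite_switchers assms]
  by (simp add: switchers_def sum.reindex inj_on_subset[OF inj_always_switch])

lemma win_prob_switchers:
  assumes "set_pmf P \<subseteq> switchers" and "m \<in> monte_strats"
  shows "win_prob P m = 1 - pmf P (always_switch (fst m))"
proof -
  have "win_prob P m = (\<Sum>c\<in>switchers. pmf P c * payoff c m)"
    unfolding win_prob_def using assms(1) switchers_subset finite_conie_strats
    by (intro sum.mono_neutral_right) (auto simp: set_pmf_eq)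
  also have "\<dots> = (\<Sum>x\<in>doors. pmf P (always_switch x) * (if x = fst m then 0 else 1))"
    by (simp add: switchers_def sum.reindex inj_on_subset[OF inj_always_switch]
        payoff_always_switch[OF assms(2)])
  also have "\<dots> = (\<Sum>x\<in>doors. pmf P (always_switch x)) - pmf P (always_switch (fst m))"
    using assms(2) by (auto simp: monte_strats_def doors_def)
  finally show ?thesis
    using sum_pmf_always_switch[OF assms(1)] by simp
qed

lemma P_star_eq: "P_star = pmf_of_set switchers"
  by (simp add: P_star_def switchers_def always_switch_def doors_def)

lemma pmf_P_star: "pmf P_star c = (if c \<in> switchers then 1/3 else 0)"
  unfolding P_star_eq by (simp add: finite_switchers switchers_def doors_def always_switch_def)

lemma conie_mixed_P_star: "conie_mixed P_star"
  using switchers_subset by (simp add: conie_mixed_def P_star_eq finite_switchers switchers_def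
      doors_def)

lemma set_pmf_P_star: "set_pmf P_star \<subseteq> switchers"
  by (auto simp: set_pmf_eq pmf_P_star)

lemma guarantee_P_star: "guarantee P_star = 2/3"
proof (rule antisym)
  show "guarantee P_star \<le> 2/3"
    by (rule guarantee_le_two_thirds[OF conie_mixed_P_star])
  show "2/3 \<le> guarantee P_star"
  proof (rule le_guarantee)
    fix m assume "m \<in> monte_strats"
    then show "2/3 \<le> win_prob P_star m"
      by (auto simp: win_prob_switchers[OF set_pmf_P_star] pmf_P_star switchers_def
          monte_strats_def)
  qed
qed

lemma SUP_guarantee: "(SUP P\<in>{P. conie_mixed P}. guarantee P) = 2/3"
  using conie_mixed_P_star guarantee_P_star guarantee_le_two_thirds
  by (intro cSup_eq_maximum) (auto intro!: rev_image_eqI[of P_star])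

lemma minimax_strategy_eq_P_star:
  assumes "minimax_strategy P"
  shows "P = P_star"
proof -
  have mixed: "conie_mixed P" and opt: "guarantee P = 2/3"
    using assms by (auto simp: minimax_strategy_def SUP_guarantee)
  have support: "set_pmf P \<subseteq> switchers"
    by (rule set_pmf_subset_switchers[OF mixed opt])
  have le: "pmf P (always_switch x) \<le> 1/3" if "x \<in> doors" for x
  proof -
    have m: "(x, if x = 1 then 2 else 1) \<in> monte_strats"
      using that by (auto simp: monte_strats_def doors_def)
    show ?thesis
      using guarantee_le_win_prob[OF m, of P] win_prob_switchers[OF support m] opt by simp
  qed
  have total: "pmf P (always_switch 1) + pmf P (always_switch 2) + pmf P (always_switch 3) = 1"
    using sum_pmf_always_switch[OF support] by (simp add: doors_def)
  have third: "pmf P (always_switch x) = 1/3" if "x \<in> doors" for x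
    using that total le[of 1] le[of 2] le[of 3] unfolding doors_def by auto
  show ?thesis
  proof (rule pmf_eqI)
    fix c
    show "pmf P c = pmf P_star c"
      using support third by (auto simp: pmf_P_star switchers_def set_pmf_eq)
  qed
qed

theorem mainTheorem8:
  shows "\<forall>P. minimax_strategy P \<longleftrightarrow> P = P_star"
  using minimax_strategy_eq_P_star conie_mixed_P_star guarantee_P_star SUP_guarantee
  by (auto simp: minimax_strategy_def)

end
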